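(* Let $m$ be a non-negative integer and $k=(m+2)^{-2}-1$. Then the identity component of the differential Galois group (over $\mathbb{C}(z)$) of the equation \[ y''+\left(\frac{2}{z}+\frac{1}{z-1}\right)y'+\left(-\frac{1}{(1+k)(z-1)^2}+\frac{1}{(1+k)z(z-1)}\right)y=0,\qquad '=\frac{d}{dz}, \] is Abelian. *)

theory Defs
  imports "HOL-Analysis.Analysis"
begin

inductive polyfun :: "nat \<Rightarrow> ((nat \<Rightarrow> complex) \<Rightarrow> complex) \<Rightarrow> bool" for n where
  pf_const: "polyfun n (\<lambda>x. c)"
| pf_var: "i < n \<Longrightarrow> polyfun n (\<lambda>x. x i)"
| pf_add: "polyfun n p \<Longrightarrow> polyfun n q \<Longrightarrow> polyfun n (\<lambda>x. p x + q x)"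
| pf_mult: "polyfun n p \<Longrightarrow> polyfun n q \<Longrightarrow> polyfun n (\<lambda>x. p x * q x)"

definition mat_coords :: "complex^2^2 \<Rightarrow> nat \<Rightarrow> complex" where
  "mat_coords M = (\<lambda>i. if i = 0 then M$1$1 else if i = 1 then M$1$2
                        else if i = 2 then M$2$1 else M$2$2)"

definition zariski_closed :: "(complex^2^2) set \<Rightarrow> bool" where
  "zariski_closed S \<longleftrightarrow> (\<exists>F. (\<forall>f\<in>F. polyfun 4 f) \<and> S = {M. \<forall>f\<in>F. f (mat_coords M) = 0})"

definition zariski_connected :: "(complex^2^2) set \<Rightarrow> bool" where
  "zariski_connected S \<longleftrightarrow> \<not> (\<exists>A B. zariski_closed A \<and> zariski_closed B \<and> S \<subseteq> A \<union> B \<and>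
       S \<inter> A \<inter> B = {} \<and> S \<inter> A \<noteq> {} \<and> S \<inter> B \<noteq> {})"

definition identity_component :: "(complex^2^2) set \<Rightarrow> (complex^2^2) set" where
  "identity_component G = \<Union>{C. C \<subseteq> G \<and> mat 1 \<in> C \<and> zariski_connected C}"

definition wronski_mat :: "(complex \<Rightarrow> complex) \<Rightarrow> (complex \<Rightarrow> complex) \<Rightarrow> complex \<Rightarrow> complex^2^2" where
  "wronski_mat y1 y2 z = vector [vector [y1 z, y2 z], vector [deriv y1 z, deriv y2 z]]"

text \<open>Polynomial relations over C(z) (denominators cleared, so polynomial in z and the
  four entries of the fundamental matrix) satisfied identically on the domain D.\<close>
definition rel_holds :: "((nat \<Rightarrow> complex) \<Rightarrow> complex) \<Rightarrow> complex set \<Rightarrow> (complex \<Rightarrow> complex^2^2) \<Rightarrow> bool" where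
  "rel_holds P D Y \<longleftrightarrow> (\<forall>z\<in>D. P (\<lambda>i. if i = 0 then z else mat_coords (Y z) (i - 1)) = 0)"

text \<open>Differential Galois group of the Picard--Vessiot extension C(z)(y1,y2,y1',y2')
  of C(z), realised (via the fundamental matrix Y) as the subgroup of GL_2(C)
  of matrices M such that Y M satisfies every algebraic relation over C(z)
  satisfied by Y.\<close>
definition diff_galois_group :: "complex set \<Rightarrow> (complex \<Rightarrow> complex) \<Rightarrow> (complex \<Rightarrow> complex) \<Rightarrow> (complex^2^2) set" where
  "diff_galois_group D y1 y2 = {M. det M \<noteq> 0 \<and>
     (\<forall>P. polyfun 5 P \<longrightarrow> rel_holds P D (wronski_mat y1 y2) \<longrightarrow>
          rel_holds P D (\<lambda>z. wronski_mat y1 y2 z ** M))}"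

end

theory Submission
  imports Defs "HOL-Complex_Analysis.Cauchy_Integral_Formula"
begin

(* The equation has the rational solution f(z) = sum_{j<=m} a_j (z-1)^-(j+2), and by Abel's
   identity z^2 (z-1) times the Wronskian of y1, y2 is a nonzero constant. Both facts are
   polynomial relations over C(z) satisfied by the fundamental matrix, so every element of the
   differential Galois group has determinant 1 and fixes the coordinate vector u of f in the
   basis y1, y2. The stabiliser of a nonzero vector in SL_2 is a one-parameter group of
   transvections; hence the whole Galois group, and a fortiori its identity component, is
   commutative. *)

lemma stabiliser_entries_transvection:
  fixes a b c d u1 u2 :: "'a::field"
  assumes fix1: "a*u1 + b*u2 = u1" and fix2: "c*u1 + d*u2 = u2" and det: "a*d - b*c = 1"
    and "u1 \<noteq> 0"
  shows "\<exists>t. a = 1 - t*u1*u2 \<and> b = t*u1^2 \<and> c = - t*u2^2 \<and> d = 1 + t*u1*u2"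
proof -
  have au: "a*u1 = u1 - b*u2" using fix1 by (simp add: eq_diff_eq)
  have cu: "c*u1 = u2 - d*u2" using fix2 by (simp add: eq_diff_eq)
  have "u1 = u1 * (a*d - b*c)" using det by simp
  also have "\<dots> = d*(a*u1) - b*(c*u1)" by (simp add: algebra_simps)
  also have "\<dots> = d*u1 - b*u2" unfolding au cu by (simp add: algebra_simps)
  finally have du: "d*u1 = u1 + b*u2" by (simp add: algebra_simps)
  show ?thesis
  proof (intro exI conjI)
    show "a = 1 - b/u1^2 * u1 * u2"
      using au \<open>u1 \<noteq> 0\<close> by (simp add: field_simps power2_eq_square)
    show "b = b/u1^2 * u1^2" using \<open>u1 \<noteq> 0\<close> by simp
    show "d = 1 + b/u1^2 * u1 * u2"
      using du \<open>u1 \<noteq> 0\<close> by (simp add: field_simps power2_eq_square)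
    have "c*u1^2 = (c*u1)*u1" by (simp add: power2_eq_square)
    also have "\<dots> = u2*u1 - u2*(d*u1)" unfolding cu by (simp add: algebra_simps)
    also have "\<dots> = - b*u2^2" unfolding du by (simp add: algebra_simps power2_eq_square)
    finally show "c = - (b/u1^2) * u2^2" using \<open>u1 \<noteq> 0\<close> by (simp add: field_simps)
  qed
qed

text \<open>The matrix I + t u v^T with v = (-u2, u1). For u \<noteq> 0 these matrices form the stabiliser
  of u in SL_2, a one-parameter group.\<close>
definition transvection :: "'a::comm_ring_1^2 \<Rightarrow> 'a \<Rightarrow> 'a^2^2" where
  "transvection u t = vector [vector [1 - t * u$1 * u$2, t * (u$1)^2],
                              vector [- t * (u$2)^2, 1 + t * u$1 * u$2]]"

lemma transvection_mult:
  "transvection u s ** transvection u t = transvection u (s + t)"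
  by (simp add: transvection_def vec_eq_iff forall_2 matrix_matrix_mult_def sum_2
      algebra_simps power2_eq_square)

lemma fixed_vector_det_one_imp_transvection:
  fixes A :: "'a::field^2^2"
  assumes fixed: "A *v u = u" and det: "det A = 1" and "u \<noteq> 0"
  obtains t where "A = transvection u t"
proof -
  have fix1: "A$1$1 * u$1 + A$1$2 * u$2 = u$1" and fix2: "A$2$1 * u$1 + A$2$2 * u$2 = u$2"
    using fixed by (simp_all add: vec_eq_iff forall_2 matrix_vector_mult_def sum_2)
  have det2: "A$1$1 * A$2$2 - A$1$2 * A$2$1 = 1" using det by (simp add: det_2)
  consider "u$1 \<noteq> 0" | "u$2 \<noteq> 0" using \<open>u \<noteq> 0\<close> by (auto simp: vec_eq_iff forall_2)
  then show ?thesis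
  proof cases
    case 1
    then obtain t where "A$1$1 = 1 - t * u$1 * u$2 \<and> A$1$2 = t * (u$1)^2 \<and>
        A$2$1 = - t * (u$2)^2 \<and> A$2$2 = 1 + t * u$1 * u$2"
      using stabiliser_entries_transvection[OF fix1 fix2 det2] by blast
    then have "A = transvection u t" by (simp add: transvection_def vec_eq_iff forall_2)
    then show ?thesis by (rule that)
  next
    case 2
    have "A$2$2 * u$2 + A$2$1 * u$1 = u$2" "A$1$2 * u$2 + A$1$1 * u$1 = u$1"
      "A$2$2 * A$1$1 - A$2$1 * A$1$2 = 1"
      using fix1 fix2 det2 by (simp_all add: algebra_simps)
    from stabiliser_entries_transvection[OF this 2] obtain t where
      "A$2$2 = 1 - t * u$2 * u$1 \<and> A$2$1 = t * (u$2)^2 \<and>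
       A$1$2 = - t * (u$1)^2 \<and> A$1$1 = 1 + t * u$2 * u$1"
      by blast
    then have "A = transvection u (- t)"
      by (simp add: transvection_def vec_eq_iff forall_2 algebra_simps)
    then show ?thesis by (rule that)
  qed
qed

lemma fixed_vector_det_one_commute:
  fixes A B :: "'a::field^2^2"
  assumes "A *v u = u" "det A = 1" "B *v u = u" "det B = 1" "u \<noteq> 0"
  shows "A ** B = B ** A"
proof -
  obtain s t where "A = transvection u s" "B = transvection u t"
    using fixed_vector_det_one_imp_transvection assms by metis
  then show ?thesis by (simp add: transvection_mult add.commute)
qed

definition ode2_solution ::
  "('a::real_normed_field \<Rightarrow> 'a) \<Rightarrow> ('a \<Rightarrow> 'a) \<Rightarrow> 'a set \<Rightarrow>
    ('a \<Rightarrow> 'a) \<Rightarrow> ('a \<Rightarrow> 'a) \<Rightarrow> ('a \<Rightarrow> 'a) \<Rightarrow> bool"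
  where "ode2_solution p q S y y' y'' \<longleftrightarrow>
    (\<forall>z\<in>S. (y has_field_derivative y' z) (at z) \<and> (y' has_field_derivative y'' z) (at z) \<and>
           y'' z + p z * y' z + q z * y z = 0)"

lemma holomorphic_ode2_solution:
  assumes "open S" "y holomorphic_on S"
    and "\<And>z. z \<in> S \<Longrightarrow> deriv (deriv y) z + p z * deriv y z + q z * y z = 0"
  shows "ode2_solution p q S y (deriv y) (deriv (deriv y))"
  using assms unfolding ode2_solution_def by (auto intro: holomorphic_derivI holomorphic_deriv)

lemma ode2_abel_identity:
  assumes "convex S"
    and g: "ode2_solution p q S g g' g''" and k: "ode2_solution p q S k k' k''"
    and h: "\<And>z. z \<in> S \<Longrightarrow> (h has_field_derivative p z * h z) (at z)"
  shows "\<exists>c. \<forall>z\<in>S. h z * (g z * k' z - k z * g' z) = c"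
proof (rule has_field_derivative_zero_constant[OF \<open>convex S\<close>])
  fix z assume z: "z \<in> S"
  have "((\<lambda>z. h z * (g z * k' z - k z * g' z)) has_field_derivative
      p z * h z * (g z * k' z - k z * g' z)
      + h z * (g' z * k' z + g z * k'' z - (k' z * g' z + k z * g'' z))) (at z)"
    using g k h z unfolding ode2_solution_def by (auto intro!: derivative_eq_intros)
  moreover have "p z * h z * (g z * k' z - k z * g' z)
      + h z * (g' z * k' z + g z * k'' z - (k' z * g' z + k z * g'' z)) = 0"
  proof -
    have "g'' z + p z * g' z + q z * g z = 0" "k'' z + p z * k' z + q z * k z = 0"
      using g k z unfolding ode2_solution_def by auto
    then show ?thesis by algebra
  qed
  ultimately show "((\<lambda>z. h z * (g z * k' z - k z * g' z)) has_field_derivative 0) (at z within S)"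
    by (metis has_field_derivative_at_within)
qed

lemma ode2_solution_in_span:
  assumes "convex S"
    and y1: "ode2_solution p q S y1 y1' y1''" and y2: "ode2_solution p q S y2 y2' y2''"
    and f: "ode2_solution p q S f f' f''"
    and h: "\<And>z. z \<in> S \<Longrightarrow> (h has_field_derivative p z * h z) (at z)"
  obtains c c1 c2 where "\<And>z. z \<in> S \<Longrightarrow> h z * (y1 z * y2' z - y2 z * y1' z) = c"
    and "\<And>z. z \<in> S \<Longrightarrow> c * f z = c1 * y2 z - c2 * y1 z"
proof -
  obtain c where c: "\<And>z. z \<in> S \<Longrightarrow> h z * (y1 z * y2' z - y2 z * y1' z) = c"
    using ode2_abel_identity[OF \<open>convex S\<close> y1 y2 h] by blast
  obtain c1 where c1: "\<And>z. z \<in> S \<Longrightarrow> h z * (y1 z * f' z - f z * y1' z) = c1"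
    using ode2_abel_identity[OF \<open>convex S\<close> y1 f h] by blast
  obtain c2 where c2: "\<And>z. z \<in> S \<Longrightarrow> h z * (y2 z * f' z - f z * y2' z) = c2"
    using ode2_abel_identity[OF \<open>convex S\<close> y2 f h] by blast
  have "c * f z = c1 * y2 z - c2 * y1 z" if "z \<in> S" for z
    unfolding c[OF that, symmetric] c1[OF that, symmetric] c2[OF that, symmetric]
    by (simp add: algebra_simps)
  with c show ?thesis by (rule that)
qed

lemma wronskian_nonzero_imp_lin_indep:
  fixes y1 y2 :: "complex \<Rightarrow> complex"
  assumes "open S" "y1 holomorphic_on S" "y2 holomorphic_on S" "z \<in> S"
    and zero: "\<And>z. z \<in> S \<Longrightarrow> \<alpha> * y1 z + \<beta> * y2 z = 0"
    and W: "y1 z * deriv y2 z - y2 z * deriv y1 z \<noteq> 0"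
  shows "\<alpha> = 0 \<and> \<beta> = 0"
proof -
  have "((\<lambda>z. \<alpha> * y1 z + \<beta> * y2 z) has_field_derivative \<alpha> * deriv y1 z + \<beta> * deriv y2 z) (at z)"
    using holomorphic_derivI[OF assms(2,1,4)] holomorphic_derivI[OF assms(3,1,4)]
    by (auto intro!: derivative_eq_intros)
  moreover have "((\<lambda>z. \<alpha> * y1 z + \<beta> * y2 z) has_field_derivative 0) (at z)"
    by (rule has_field_derivative_transform_within_open[OF DERIV_const assms(1,4)]) (simp add: zero)
  ultimately have d: "\<alpha> * deriv y1 z + \<beta> * deriv y2 z = 0" using DERIV_unique by blast
  have "\<alpha> * (y1 z * deriv y2 z - y2 z * deriv y1 z) = 0"
    "\<beta> * (y1 z * deriv y2 z - y2 z * deriv y1 z) = 0"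
    using zero[OF \<open>z \<in> S\<close>] d by algebra+
  with W show ?thesis by simp
qed

lemma polyfun_diff: "polyfun n p \<Longrightarrow> polyfun n q \<Longrightarrow> polyfun n (\<lambda>x. p x - q x)"
  using pf_add[OF _ pf_mult[OF pf_const[of n "-1"]], of p q] by simp

lemma polyfun_power: "polyfun n p \<Longrightarrow> polyfun n (\<lambda>x. p x ^ k)"
proof (induction k)
  case 0
  show ?case using pf_const[of n 1] by simp
next
  case (Suc k)
  then show ?case using pf_mult[of n p "\<lambda>x. p x ^ k"] by simp
qed

lemma polyfun_sum:
  "finite A \<Longrightarrow> (\<And>j. j \<in> A \<Longrightarrow> polyfun n (f j)) \<Longrightarrow> polyfun n (\<lambda>x. \<Sum>j\<in>A. f j x)"
proof (induction A rule: finite_induct)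
  case empty
  show ?case using pf_const[of n 0] by simp
next
  case (insert a A)
  then show ?case using pf_add[of n "f a" "\<lambda>x. \<Sum>j\<in>A. f j x"] by simp
qed

lemma det_wronski_mat: "det (wronski_mat y1 y2 z) = y1 z * deriv y2 z - y2 z * deriv y1 z"
  by (simp add: det_2 wronski_mat_def)

lemma wronski_mat_mult_row1:
  "(wronski_mat y1 y2 z ** M)$1$j = y1 z * M$1$j + y2 z * M$2$j"
  by (simp add: matrix_matrix_mult_def sum_2 wronski_mat_def)

lemma diff_galois_group_det_eq_one:
  assumes M: "M \<in> diff_galois_group D y1 y2"
    and h: "polyfun 5 (\<lambda>x. h (x 0))"
    and W: "\<And>z. z \<in> D \<Longrightarrow> h z * (y1 z * deriv y2 z - y2 z * deriv y1 z) = c"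
    and "c \<noteq> 0" "z \<in> D"
  shows "det M = 1"
proof -
  define P where "P x = h (x 0) * (x 1 * x 4 - x 2 * x 3) - c" for x :: "nat \<Rightarrow> complex"
  have "polyfun 5 P"
    unfolding P_def by (intro polyfun_diff pf_mult pf_const pf_var h) auto
  have P_eval: "P (\<lambda>i. if i = 0 then z else mat_coords Y (i - 1)) = h z * det Y - c" for z Y
    by (simp add: P_def mat_coords_def det_2)
  have "rel_holds P D (wronski_mat y1 y2)"
    unfolding rel_holds_def P_eval det_wronski_mat using W by simp
  then have "rel_holds P D (\<lambda>z. wronski_mat y1 y2 z ** M)"
    using M \<open>polyfun 5 P\<close> unfolding diff_galois_group_def by blast
  then have "h z * (det (wronski_mat y1 y2 z) * det M) = c"
    using \<open>z \<in> D\<close> unfolding rel_holds_def P_eval det_mul by simp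
  then have "c * det M = c"
    unfolding det_wronski_mat W[OF \<open>z \<in> D\<close>, symmetric] by (simp add: ac_simps)
  with \<open>c \<noteq> 0\<close> show ?thesis by simp
qed

lemma diff_galois_group_fixes_rational_solution:
  assumes M: "M \<in> diff_galois_group D y1 y2"
    and "open D" "y1 holomorphic_on D" "y2 holomorphic_on D"
    and "z0 \<in> D" "y1 z0 * deriv y2 z0 - y2 z0 * deriv y1 z0 \<noteq> 0"
    and g: "polyfun 5 (\<lambda>x. g (x 0))" and r: "polyfun 5 (\<lambda>x. r (x 0))"
    and rel: "\<And>z. z \<in> D \<Longrightarrow> g z * (u$1 * y1 z + u$2 * y2 z) = r z"
    and g_nz: "\<And>z. z \<in> D \<Longrightarrow> g z \<noteq> 0"
  shows "M *v u = u"
proof -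
  define P where "P x = g (x 0) * (u$1 * x 1 + u$2 * x 2) - r (x 0)" for x :: "nat \<Rightarrow> complex"
  have "polyfun 5 P"
    unfolding P_def by (intro polyfun_diff pf_add pf_mult pf_const pf_var g r) auto
  have P_eval: "P (\<lambda>i. if i = 0 then z else mat_coords Y (i - 1)) =
      g z * (u$1 * Y$1$1 + u$2 * Y$1$2) - r z" for z Y
    by (simp add: P_def mat_coords_def)
  have "rel_holds P D (wronski_mat y1 y2)"
    unfolding rel_holds_def P_eval using rel by (simp add: wronski_mat_def)
  then have "rel_holds P D (\<lambda>z. wronski_mat y1 y2 z ** M)"
    using M \<open>polyfun 5 P\<close> unfolding diff_galois_group_def by blast
  have "((M *v u)$1 - u$1) * y1 z + ((M *v u)$2 - u$2) * y2 z = 0" if "z \<in> D" for z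
  proof -
    let ?Y = "wronski_mat y1 y2 z ** M"
    have "g z * (u$1 * ?Y$1$1 + u$2 * ?Y$1$2) = g z * (u$1 * y1 z + u$2 * y2 z)"
      using \<open>rel_holds P D (\<lambda>z. wronski_mat y1 y2 z ** M)\<close> that
      unfolding rel_holds_def P_eval rel[OF that] by simp
    then have "u$1 * ?Y$1$1 + u$2 * ?Y$1$2 = u$1 * y1 z + u$2 * y2 z"
      using g_nz[OF that] by simp
    then show ?thesis
      unfolding wronski_mat_mult_row1 by (simp add: matrix_vector_mult_def sum_2 algebra_simps)
  qed
  then have "(M *v u)$1 - u$1 = 0 \<and> (M *v u)$2 - u$2 = 0"
    using wronskian_nonzero_imp_lin_indep assms(2-6) by blast
  then show ?thesis by (simp add: vec_eq_iff forall_2)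
qed

lemma diff_galois_group_commute:
  fixes u :: "complex^2"
  assumes D: "open D" "z0 \<in> D" and hol: "y1 holomorphic_on D" "y2 holomorphic_on D"
    and fund: "y1 z0 * deriv y2 z0 - y2 z0 * deriv y1 z0 \<noteq> 0"
    and wronskian: "polyfun 5 (\<lambda>x. h (x 0))" "c \<noteq> 0"
      "\<And>z. z \<in> D \<Longrightarrow> h z * (y1 z * deriv y2 z - y2 z * deriv y1 z) = c"
    and solution: "polyfun 5 (\<lambda>x. g (x 0))" "polyfun 5 (\<lambda>x. r (x 0))" "u \<noteq> 0"
      "\<And>z. z \<in> D \<Longrightarrow> g z * (u$1 * y1 z + u$2 * y2 z) = r z" "\<And>z. z \<in> D \<Longrightarrow> g z \<noteq> 0"
    and "A \<in> diff_galois_group D y1 y2" "B \<in> diff_galois_group D y1 y2"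
  shows "A ** B = B ** A"
proof (rule fixed_vector_det_one_commute)
  show "A *v u = u" "B *v u = u"
    using diff_galois_group_fixes_rational_solution[OF _ D(1) hol D(2) fund solution(1,2,4,5)]
      \<open>A \<in> _\<close> \<open>B \<in> _\<close> by blast+
  show "det A = 1" "det B = 1"
    using diff_galois_group_det_eq_one[OF _ wronskian(1,3,2) D(2)] \<open>A \<in> _\<close> \<open>B \<in> _\<close> by blast+
qed (fact \<open>u \<noteq> 0\<close>)

text \<open>Coefficients of the rational solution in powers of 1/(z-1). The recursion would give
  zero beyond j = m, where the factor (m+2)^2 - (j+2)^2 vanishes; this is why the sums
  below stop at m.\<close>
fun ratsol_coeff :: "nat \<Rightarrow> nat \<Rightarrow> complex" where
  "ratsol_coeff m 0 = 1"
| "ratsol_coeff m (Suc j) =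
     ratsol_coeff m j * ((of_nat m + 2)^2 - (of_nat j + 2)^2) / ((of_nat j + 2)^2 - 1)"

lemma ratsol_coeff_Suc:
  "ratsol_coeff m (Suc j) * ((of_nat j + 2)^2 - 1) =
    ratsol_coeff m j * ((of_nat m + 2)^2 - (of_nat j + 2)^2)"
proof -
  have "(of_nat j + 2 :: complex)^2 \<noteq> 1"
  proof
    assume "(of_nat j + 2 :: complex)^2 = 1"
    then have "of_nat ((j + 2)^2) = (of_nat 1 :: complex)" by (simp add: add.commute)
    then have "(j + 2)^2 = 1" by (simp only: of_nat_eq_iff)
    then show False by (simp add: power2_eq_square)
  qed
  then show ?thesis by simp
qed

definition ratsol :: "nat \<Rightarrow> complex \<Rightarrow> complex" where
  "ratsol m z = (\<Sum>j\<le>m. ratsol_coeff m j * (1 / (z - 1))^(j + 2))"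

definition ratsol' :: "nat \<Rightarrow> complex \<Rightarrow> complex" where
  "ratsol' m z = (\<Sum>j\<le>m. - of_nat (j + 2) * ratsol_coeff m j * (1 / (z - 1))^(j + 3))"

definition ratsol'' :: "nat \<Rightarrow> complex \<Rightarrow> complex" where
  "ratsol'' m z = (\<Sum>j\<le>m. of_nat ((j + 2) * (j + 3)) * ratsol_coeff m j * (1 / (z - 1))^(j + 4))"

lemma has_field_derivative_inverse_power_sum:
  fixes z :: complex
  assumes "z \<noteq> 1"
  shows "((\<lambda>z. \<Sum>j\<in>J. c j * (1 / (z - 1))^(j + r)) has_field_derivative
           (\<Sum>j\<in>J. - of_nat (j + r) * c j * (1 / (z - 1))^(j + r + 1))) (at z)"
proof (rule DERIV_sum)
  fix j
  have w: "((\<lambda>z. 1 / (z - 1)) has_field_derivative - ((1 / (z - 1))^2)) (at z)"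
    using assms by (auto intro!: derivative_eq_intros simp: power2_eq_square field_simps)
  have pow: "c * (of_nat n * (- (w^2) * w^(n - Suc 0))) = - of_nat n * c * w^(n + 1)"
    for c w :: complex and n
    by (cases n) (simp_all add: power2_eq_square algebra_simps)
  show "((\<lambda>z. c j * (1 / (z - 1))^(j + r)) has_field_derivative
      - of_nat (j + r) * c j * (1 / (z - 1))^(j + r + 1)) (at z)"
    by (rule DERIV_cong[OF DERIV_cmult[OF DERIV_power[OF w]] pow])
qed

lemma ratsol_has_derivative:
  assumes "z \<noteq> 1" shows "(ratsol m has_field_derivative ratsol' m z) (at z)"
proof -
  have f: "ratsol m = (\<lambda>z. \<Sum>j\<le>m. ratsol_coeff m j * (1 / (z - 1))^(j + 2))"
    by (simp add: fun_eq_iff ratsol_def)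
  have f': "ratsol' m z =
      (\<Sum>j\<le>m. - of_nat (j + 2) * ratsol_coeff m j * (1 / (z - 1))^(j + 2 + 1))"
    unfolding ratsol'_def add.assoc by (simp only: numeral_plus_one semiring_norm)
  show ?thesis unfolding f f' by (rule has_field_derivative_inverse_power_sum[OF assms])
qed

lemma ratsol'_has_derivative:
  assumes "z \<noteq> 1" shows "(ratsol' m has_field_derivative ratsol'' m z) (at z)"
proof -
  have f': "ratsol' m =
      (\<lambda>z. \<Sum>j\<le>m. (- of_nat (j + 2) * ratsol_coeff m j) * (1 / (z - 1))^(j + 3))"
    by (simp add: fun_eq_iff ratsol'_def)
  have f'': "ratsol'' m z =
      (\<Sum>j\<le>m. - of_nat (j + 3) * (- of_nat (j + 2) * ratsol_coeff m j) *
        (1 / (z - 1))^(j + 3 + 1))"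
    unfolding ratsol''_def add.assoc
    by (simp only: numeral_plus_one semiring_norm) (simp add: algebra_simps)
  show ?thesis unfolding f' f'' by (rule has_field_derivative_inverse_power_sum[OF assms])
qed

text \<open>In the variable w = 1/(z-1) the equation multiplied by z/(z-1) reads
  (w + 1) y'' + (w^2 + 3w) y' - (m+2)^2 w^3 y = 0; the recursion for the coefficients
  makes it telescope.\<close>
lemma ratsol_equation_in_inverse_variable:
  assumes "w = 1 / (z - 1)"
  shows "(w + 1) * ratsol'' m z + (w^2 + 3 * w) * ratsol' m z
           - (of_nat m + 2)^2 * w^3 * ratsol m z = 0"
proof -
  define n :: complex where "n = of_nat m + 2"
  define g where "g j = ratsol_coeff m j * (of_nat (j + 2) * of_nat j) * w^(j + 4)" for j
  define h where "h j = ratsol_coeff m j * ((of_nat j + 2)^2 - n^2) * w^(j + 5)" for j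
  have "(w + 1) * ratsol'' m z + (w^2 + 3 * w) * ratsol' m z - n^2 * w^3 * ratsol m z
      = (\<Sum>j\<le>m. h j + g j)"
    unfolding ratsol_def ratsol'_def ratsol''_def assms[symmetric]
      sum_distrib_left sum_subtractf[symmetric] sum.distrib[symmetric]
    by (intro sum.cong refl) (unfold g_def h_def power_add of_nat_add of_nat_mult of_nat_numeral, algebra)
  also have "\<dots> = (\<Sum>j<m. h j + g (Suc j))"
  proof -
    have "h m = 0" "g 0 = 0" by (simp_all add: h_def g_def n_def)
    moreover have "(\<Sum>j\<le>m. h j) = (\<Sum>j<m. h j) + h m"
      by (simp add: lessThan_Suc_atMost[symmetric])
    moreover have "(\<Sum>j\<le>m. g j) = g 0 + (\<Sum>j<m. g (Suc j))"
      by (rule sum.atMost_shift)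
    ultimately show ?thesis by (simp add: sum.distrib)
  qed
  also have "\<dots> = 0"
  proof (intro sum.neutral ballI)
    fix j
    have "g (Suc j) = ratsol_coeff m (Suc j) * ((of_nat j + 2)^2 - 1) * w^(j + 5)"
      by (simp add: g_def algebra_simps power2_eq_square)
    also have "\<dots> = ratsol_coeff m j * (n^2 - (of_nat j + 2)^2) * w^(j + 5)"
      unfolding n_def by (simp only: ratsol_coeff_Suc)
    finally show "h j + g (Suc j) = 0" by (simp add: h_def algebra_simps)
  qed
  finally show ?thesis unfolding n_def .
qed

lemma equation_coefficients_in_inverse_variable:
  fixes z k :: complex
  assumes "z \<noteq> 0" "z \<noteq> 1" and k: "1 + k = 1 / n^2" and "n \<noteq> 0" and w: "w = 1 / (z - 1)"
  shows "z * w = w + 1" "z * w * (2 / z + 1 / (z - 1)) = w^2 + 3 * w"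
    "z * w * (- 1 / ((1 + k) * (z - 1)^2) + 1 / ((1 + k) * z * (z - 1))) = - (n^2 * w^3)"
proof -
  show zw: "z * w = w + 1" using assms unfolding w by (simp add: field_simps)
  have inv: "1 / (z - 1) = w" "1 / (z - 1)^2 = w^2" by (simp_all add: w power_one_over)
  have "z * w * (2 / z + 1 / (z - 1)) = 2 * w * (z / z) + (z * w) * w"
    unfolding inv by (simp add: algebra_simps)
  also have "\<dots> = w^2 + 3 * w"
    using \<open>z \<noteq> 0\<close> unfolding zw by (simp add: algebra_simps power2_eq_square)
  finally show "z * w * (2 / z + 1 / (z - 1)) = w^2 + 3 * w" .
  have "- 1 / ((1 + k) * (z - 1)^2) = - (n^2 * w^2)" "1 / ((1 + k) * z * (z - 1)) = n^2 * w / z"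
    unfolding k inv[symmetric] using \<open>n \<noteq> 0\<close> by (simp_all add: field_simps)
  then have "z * w * (- 1 / ((1 + k) * (z - 1)^2) + 1 / ((1 + k) * z * (z - 1)))
      = n^2 * w^2 * (z / z - z * w)"
    by (simp add: algebra_simps power2_eq_square)
  also have "\<dots> = - (n^2 * w^3)"
    using \<open>z \<noteq> 0\<close> unfolding zw by (simp add: algebra_simps power2_eq_square power3_eq_cube)
  finally show "z * w * (- 1 / ((1 + k) * (z - 1)^2) + 1 / ((1 + k) * z * (z - 1))) = - (n^2 * w^3)" .
qed

lemma ratsol_ode:
  fixes z k :: complex
  assumes "z \<noteq> 0" "z \<noteq> 1" and k: "1 + k = 1 / (of_nat m + 2)^2"
  shows "ratsol'' m z + (2 / z + 1 / (z - 1)) * ratsol' m z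
           + (- 1 / ((1 + k) * (z - 1)^2) + 1 / ((1 + k) * z * (z - 1))) * ratsol m z = 0"
proof -
  define w where "w = 1 / (z - 1)"
  define n :: complex where "n = of_nat m + 2"
  have "n \<noteq> 0"
    unfolding n_def by (metis of_nat_add of_nat_eq_0_iff of_nat_numeral add_is_0 zero_neq_numeral)
  note coeffs = equation_coefficients_in_inverse_variable[OF assms(1,2) k[folded n_def] this w_def]
  have "z * w * (ratsol'' m z + (2 / z + 1 / (z - 1)) * ratsol' m z
           + (- 1 / ((1 + k) * (z - 1)^2) + 1 / ((1 + k) * z * (z - 1))) * ratsol m z)
      = z * w * ratsol'' m z + z * w * (2 / z + 1 / (z - 1)) * ratsol' m z
           + z * w * (- 1 / ((1 + k) * (z - 1)^2) + 1 / ((1 + k) * z * (z - 1))) * ratsol m z"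
    by (simp add: ring_distribs mult_ac)
  also have "\<dots> = (w + 1) * ratsol'' m z + (w^2 + 3 * w) * ratsol' m z - n^2 * w^3 * ratsol m z"
    unfolding coeffs(2,3) by (simp add: coeffs(1))
  also have "\<dots> = 0" unfolding n_def by (rule ratsol_equation_in_inverse_variable[OF w_def])
  finally show ?thesis using assms unfolding w_def by simp
qed

lemma ratsol_ode2_solution:
  assumes "1 + k = 1 / (of_nat m + 2)^2" and "\<And>z. z \<in> S \<Longrightarrow> z \<noteq> 0 \<and> z \<noteq> 1"
  shows "ode2_solution (\<lambda>z. 2 / z + 1 / (z - 1))
      (\<lambda>z. - 1 / ((1 + k) * (z - 1)^2) + 1 / ((1 + k) * z * (z - 1))) S
      (ratsol m) (ratsol' m) (ratsol'' m)"
  unfolding ode2_solution_def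
proof (intro ballI conjI)
  fix z assume "z \<in> S"
  then have "z \<noteq> 0" "z \<noteq> 1" using assms(2) by auto
  show "(ratsol m has_field_derivative ratsol' m z) (at z)"
    "(ratsol' m has_field_derivative ratsol'' m z) (at z)"
    using \<open>z \<noteq> 1\<close> by (rule ratsol_has_derivative ratsol'_has_derivative)+
  show "ratsol'' m z + (2 / z + 1 / (z - 1)) * ratsol' m z
      + (- 1 / ((1 + k) * (z - 1)^2) + 1 / ((1 + k) * z * (z - 1))) * ratsol m z = 0"
    by (rule ratsol_ode[OF \<open>z \<noteq> 0\<close> \<open>z \<noteq> 1\<close> assms(1)])
qed

lemma ratsol_clear_denominator:
  assumes "z \<noteq> 1"
  shows "(z - 1)^(m + 2) * ratsol m z = (\<Sum>j\<le>m. ratsol_coeff m j * (z - 1)^(m - j))"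
  unfolding ratsol_def sum_distrib_left
proof (intro sum.cong refl)
  fix j assume "j \<in> {..m}"
  then have "(z - 1)^(m + 2) = (z - 1)^(m - j) * (z - 1)^(j + 2)"
    by (simp flip: power_add)
  moreover have "(z - 1)^(j + 2) * (1 / (z - 1))^(j + 2) = 1"
    using assms by (simp flip: power_mult_distrib)
  ultimately show "(z - 1)^(m + 2) * (ratsol_coeff m j * (1 / (z - 1))^(j + 2)) =
      ratsol_coeff m j * (z - 1)^(m - j)"
    by (metis (no_types, lifting) mult.assoc mult.commute mult.right_neutral)
qed

lemma ratsol_zeros_finite: "finite {z. z \<noteq> 1 \<and> ratsol m z = 0}"
proof -
  define Z where "Z = {t :: complex. (\<Sum>i\<le>m. ratsol_coeff m (m - i) * t^i) = 0}"
  have "finite Z"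
    unfolding Z_def by (subst polyfun_finite_roots) (auto intro!: exI[of _ m])
  moreover have "{z. z \<noteq> 1 \<and> ratsol m z = 0} \<subseteq> (\<lambda>t. t + 1) ` Z"
  proof
    fix z assume z: "z \<in> {z. z \<noteq> 1 \<and> ratsol m z = 0}"
    have "(\<Sum>i\<le>m. ratsol_coeff m (m - i) * (z - 1)^i) = (\<Sum>j\<le>m. ratsol_coeff m j * (z - 1)^(m - j))"
      using sum.atLeastAtMost_rev[of "\<lambda>j. ratsol_coeff m j * (z - 1)^(m - j)" 0 m]
      by (simp add: atMost_atLeast0)
    also have "\<dots> = 0" using z by (simp flip: ratsol_clear_denominator)
    finally have "z - 1 \<in> Z" unfolding Z_def by simp
    then show "z \<in> (\<lambda>t. t + 1) ` Z" by (rule rev_image_eqI) simp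
  qed
  ultimately show ?thesis by (meson finite_imageI finite_subset)
qed

theorem lemma3:
  fixes m :: nat and k :: complex and y1 y2 :: "complex \<Rightarrow> complex"
  defines "k \<equiv> 1 / (of_nat m + 2)^2 - 1"
  defines "D \<equiv> ball (1/2 :: complex) (1/2)"
  assumes hol: "y1 holomorphic_on D" "y2 holomorphic_on D"
    and ode: "\<And>y z. y \<in> {y1, y2} \<Longrightarrow> z \<in> D \<Longrightarrow>
        deriv (deriv y) z + (2 / z + 1 / (z - 1)) * deriv y z
        + (- 1 / ((1 + k) * (z - 1)^2) + 1 / ((1 + k) * z * (z - 1))) * y z = 0"
    and fund: "\<And>z. z \<in> D \<Longrightarrow> y1 z * deriv y2 z - y2 z * deriv y1 z \<noteq> 0"
  shows "\<forall>A\<in>identity_component (diff_galois_group D y1 y2).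
           \<forall>B\<in>identity_component (diff_galois_group D y1 y2). A ** B = B ** A"
proof -
  have "open D" "convex D" and half: "1/2 \<in> D" unfolding D_def by auto
  have nz: "z \<noteq> 0 \<and> z \<noteq> 1" if "z \<in> D" for z
    using that unfolding D_def by (auto simp: dist_norm)
  define p where "p z = 2 / z + 1 / (z - 1)" for z :: complex
  define q where "q z = - 1 / ((1 + k) * (z - 1)^2) + 1 / ((1 + k) * z * (z - 1))" for z :: complex
  define h where "h z = z^2 * (z - 1)" for z :: complex
  have sol: "ode2_solution p q D y (deriv y) (deriv (deriv y))" if y: "y \<in> {y1, y2}" for y
  proof (rule holomorphic_ode2_solution[OF \<open>open D\<close>])
    show "y holomorphic_on D" using y hol by auto
    show "deriv (deriv y) z + p z * deriv y z + q z * y z = 0" if "z \<in> D" for z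
      using ode[OF y that] unfolding p_def q_def .
  qed
  have sol_ratsol: "ode2_solution p q D (ratsol m) (ratsol' m) (ratsol'' m)"
    unfolding p_def q_def by (rule ratsol_ode2_solution) (use nz in \<open>auto simp: k_def\<close>)
  have h_deriv: "(h has_field_derivative p z * h z) (at z)" if "z \<in> D" for z
    using nz[OF that] unfolding h_def p_def
    by (auto intro!: derivative_eq_intros simp: field_simps power2_eq_square)
  obtain c c1 c2
    where W: "\<And>z. z \<in> D \<Longrightarrow> h z * (y1 z * deriv y2 z - y2 z * deriv y1 z) = c"
      and span: "\<And>z. z \<in> D \<Longrightarrow> c * ratsol m z = c1 * y2 z - c2 * y1 z"
    using ode2_solution_in_span[OF \<open>convex D\<close> sol[of y1] sol[of y2] sol_ratsol h_deriv] by auto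
  have "c \<noteq> 0" using W[OF half] fund[OF half] nz[OF half] unfolding h_def by auto
  define u :: "complex^2" where "u = vector [- c2, c1]"
  have "u \<noteq> 0"
  proof
    assume "u = 0"
    then have "D \<subseteq> {z. z \<noteq> 1 \<and> ratsol m z = 0}"
      using span nz \<open>c \<noteq> 0\<close> by (auto simp: u_def vec_eq_iff forall_2)
    then show False
      using ratsol_zeros_finite finite_subset finite_imp_not_open \<open>open D\<close> half by blast
  qed
  have rel: "(z - 1)^(m + 2) * (u$1 * y1 z + u$2 * y2 z) =
      c * (\<Sum>j\<le>m. ratsol_coeff m j * (z - 1)^(m - j))" if "z \<in> D" for z
  proof -
    have "u$1 * y1 z + u$2 * y2 z = c * ratsol m z" using span[OF that] by (simp add: u_def)
    moreover have "z \<noteq> 1" using nz[OF that] by simp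
    ultimately show ?thesis using ratsol_clear_denominator by (metis mult.left_commute)
  qed
  have polys: "polyfun 5 (\<lambda>x. h (x 0))" "polyfun 5 (\<lambda>x. (x 0 - 1)^(m + 2))"
      "polyfun 5 (\<lambda>x. c * (\<Sum>j\<le>m. ratsol_coeff m j * (x 0 - 1)^(m - j)))"
    unfolding h_def by (intro pf_mult pf_const polyfun_sum polyfun_power polyfun_diff pf_var; simp)+
  have denom_nz: "(z - 1)^(m + 2) \<noteq> 0" if "z \<in> D" for z using nz[OF that] by simp
  note commute = diff_galois_group_commute[OF \<open>open D\<close> half hol fund[OF half] polys(1)
      \<open>c \<noteq> 0\<close> W polys(2,3) \<open>u \<noteq> 0\<close> rel denom_nz]
  have "identity_component (diff_galois_group D y1 y2) \<subseteq> diff_galois_group D y1 y2"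
    unfolding identity_component_def by blast
  with commute show ?thesis by blast
qed

end
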